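(* For any pure state $\ket\Psi\in\mathcal H_A\otimes\mathcal H_B\otimes\mathcal H_C$ (finite-dimensional), $G(A:B:C)_{\ket\Psi}\le S_0(A)+S_2(B)$, where $S_0(A)=\log\operatorname{rank}\rho_A$ and $S_2(B)=-\log\operatorname{tr}\rho_B^2$, with $\rho_A,\rho_B$ the reduced density matrices of $\ket\Psi$.
   Context: For a subsystem $X$ and $\pi\in S_n$, $\pi_X$ permutes the $n$ copies of $\mathcal H_X$ according to $\pi$ and acts trivially otherwise. $\pi^{(1)}=(12)(34)$, $\pi^{(2)}=(13)(24)$, $\pi^{(3)}=(14)(23)\in S_4$; $Z(A:B:C)_{\ket\Psi}=\bra\Psi^{\otimes4}(\pi^{(1)}_A\otimes\pi^{(2)}_B\otimes\pi^{(3)}_C)\ket\Psi^{\otimes4}$ (a positive real number) and $G(A:B:C)_{\ket\Psi}=-\tfrac12\log Z(A:B:C)_{\ket\Psi}$. *)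

theory Defs
  imports "HOL-Analysis.Analysis" "HOL-Library.FuncSet" "HOL-Combinatorics.Transposition"
begin

text \<open>A vector of H_A (x) H_B (x) H_C with finite-dimensional factors is represented by its
  coefficients psi a b c in the product of the computational bases (index types 'a,'b,'c).\<close>

definition is_pure_state :: "('a::finite \<Rightarrow> 'b::finite \<Rightarrow> 'c::finite \<Rightarrow> complex) \<Rightarrow> bool" where
  "is_pure_state \<psi> \<longleftrightarrow> (\<Sum>a\<in>UNIV. \<Sum>b\<in>UNIV. \<Sum>c\<in>UNIV. (cmod (\<psi> a b c))\<^sup>2) = 1"

text \<open>Configurations of n copies: basis labels of (H_A (x) H_B (x) H_C)^(x n),
  copies indexed by 0..n-1.\<close>
definition configs :: "nat \<Rightarrow> (nat \<Rightarrow> 'a \<times> 'b \<times> 'c) set" where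
  "configs n = PiE {..<n} (\<lambda>_. UNIV)"

definition tensor_pow :: "('a \<Rightarrow> 'b \<Rightarrow> 'c \<Rightarrow> complex) \<Rightarrow> nat \<Rightarrow> (nat \<Rightarrow> 'a \<times> 'b \<times> 'c) \<Rightarrow> complex" where
  "tensor_pow \<psi> n y = (\<Prod>k<n. \<psi> (fst (y k)) (fst (snd (y k))) (snd (snd (y k))))"

text \<open>The operator pi_A (x) sigma_B (x) tau_C on n copies: pi_X sends the basis vector
  |x_1 ... x_n> of H_X^(x n) to |x_(pi^-1 1) ... x_(pi^-1 n)>, so on coefficients
  (pi v)(y) = v(y o pi), componentwise on the A, B, C labels.\<close>
definition perm_op :: "(nat \<Rightarrow> nat) \<Rightarrow> (nat \<Rightarrow> nat) \<Rightarrow> (nat \<Rightarrow> nat) \<Rightarrow>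
    ((nat \<Rightarrow> 'a \<times> 'b \<times> 'c) \<Rightarrow> complex) \<Rightarrow> (nat \<Rightarrow> 'a \<times> 'b \<times> 'c) \<Rightarrow> complex" where
  "perm_op \<pi>A \<pi>B \<pi>C v y =
     v (\<lambda>k. (fst (y (\<pi>A k)), fst (snd (y (\<pi>B k))), snd (snd (y (\<pi>C k)))))"

definition pi1 :: "nat \<Rightarrow> nat" where "pi1 = Transposition.transpose 0 1 \<circ> Transposition.transpose 2 3"
definition pi2 :: "nat \<Rightarrow> nat" where "pi2 = Transposition.transpose 0 2 \<circ> Transposition.transpose 1 3"
definition pi3 :: "nat \<Rightarrow> nat" where "pi3 = Transposition.transpose 0 3 \<circ> Transposition.transpose 1 2"

definition Z_ABC :: "('a::finite \<Rightarrow> 'b::finite \<Rightarrow> 'c::finite \<Rightarrow> complex) \<Rightarrow> complex" where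
  "Z_ABC \<psi> = (\<Sum>y\<in>configs 4. cnj (tensor_pow \<psi> 4 y) * perm_op pi1 pi2 pi3 (tensor_pow \<psi> 4) y)"

text \<open>G = -(1/2) log Z; Z is a positive real, we take its real part. Logarithms base 2.\<close>
definition G_ABC :: "('a::finite \<Rightarrow> 'b::finite \<Rightarrow> 'c::finite \<Rightarrow> complex) \<Rightarrow> real" where
  "G_ABC \<psi> = - (1/2) * log 2 (Re (Z_ABC \<psi>))"

definition rho_A :: "('a::finite \<Rightarrow> 'b::finite \<Rightarrow> 'c::finite \<Rightarrow> complex) \<Rightarrow> complex^'a^'a" where
  "rho_A \<psi> = (\<chi> a a'. \<Sum>b\<in>UNIV. \<Sum>c\<in>UNIV. \<psi> a b c * cnj (\<psi> a' b c))"

definition rho_B :: "('a::finite \<Rightarrow> 'b::finite \<Rightarrow> 'c::finite \<Rightarrow> complex) \<Rightarrow> complex^'b^'b" where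
  "rho_B \<psi> = (\<chi> b b'. \<Sum>a\<in>UNIV. \<Sum>c\<in>UNIV. \<psi> a b c * cnj (\<psi> a b' c))"

definition S0_A :: "('a::finite \<Rightarrow> 'b::finite \<Rightarrow> 'c::finite \<Rightarrow> complex) \<Rightarrow> real" where
  "S0_A \<psi> = log 2 (real (rank (rho_A \<psi>)))"

definition S2_B :: "('a::finite \<Rightarrow> 'b::finite \<Rightarrow> 'c::finite \<Rightarrow> complex) \<Rightarrow> real" where
  "S2_B \<psi> = - log 2 (Re (trace (rho_B \<psi> ** rho_B \<psi>)))"

end

theory Submission
  imports Defs
begin

text \<open>Contracting the B and C legs of four copies of \<Psi> gives a tensor W (bc_contraction) on four copies of A
  with Z = \<Sum> |W(a0,a1,a2,a3)|^2 and tr \<rho>_B^2 = \<Sum> W(a,a',a,a').  The orthogonal projector P onto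
  the support of \<rho>_A satisfies (P \<otimes> 1)\<Psi> = \<Psi>, so tr \<rho>_B^2 is the pairing of W with P \<otimes> P,
  whose Hilbert-Schmidt norm is rank \<rho>_A.  Cauchy-Schwarz gives (tr \<rho>_B^2)^2 \<le> (rank \<rho>_A)^2 Z,
  which is the claim after taking logarithms.\<close>

lemma cnj_mult_self: "z * cnj z = complex_of_real ((cmod z)\<^sup>2)"
  by (simp only: complex_norm_square)

lemma cnj_self_mult: "cnj z * z = complex_of_real ((cmod z)\<^sup>2)"
  by (simp only: complex_norm_square mult.commute)

lemma sum_norm_square_eq_0D:
  fixes f :: "'i \<Rightarrow> 'v::real_normed_vector"
  assumes "finite A" "(\<Sum>i\<in>A. (norm (f i))\<^sup>2) = 0" "i \<in> A"
  shows "f i = 0"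
  using assms by (subst (asm) sum_nonneg_eq_0_iff) auto

lemma sum_UNIV_prod: "sum f (UNIV :: ('x::finite \<times> 'y::finite) set) = (\<Sum>x\<in>UNIV. \<Sum>y\<in>UNIV. f (x, y))"
  by (simp only: sum.cartesian_product UNIV_Times_UNIV case_prod_eta)

lemma sum_swap_1_2: "(\<Sum>c\<in>C. \<Sum>j\<in>J. \<Sum>i\<in>I. f c j i) = (\<Sum>j\<in>J. \<Sum>i\<in>I. \<Sum>c\<in>C. f c j i)"
  by (subst sum.swap) (rule sum.cong[OF refl], rule sum.swap)

lemma sum_swap_2_2:
  "(\<Sum>b\<in>B. \<Sum>c\<in>C. \<Sum>j\<in>J. \<Sum>i\<in>I. f b c j i) = (\<Sum>j\<in>J. \<Sum>i\<in>I. \<Sum>b\<in>B. \<Sum>c\<in>C. f b c j i)"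
  by (subst sum.cong[OF refl sum_swap_1_2]) (rule sum_swap_1_2)

lemma sum_swap_4_2:
  "(\<Sum>b\<in>B. \<Sum>b'\<in>B'. \<Sum>c\<in>C. \<Sum>c'\<in>C'. \<Sum>x\<in>X. \<Sum>x'\<in>X'. f b b' c c' x x')
   = (\<Sum>x\<in>X. \<Sum>x'\<in>X'. \<Sum>b\<in>B. \<Sum>b'\<in>B'. \<Sum>c\<in>C. \<Sum>c'\<in>C'. f b b' c c' x x')"
  by (subst sum.cong[OF refl sum.cong[OF refl sum_swap_2_2]]) (rule sum_swap_2_2)

lemma member_le_sum_sum:
  fixes f :: "'x \<Rightarrow> 'y \<Rightarrow> 'r::{semiring_1, ordered_comm_monoid_add}"
  assumes "finite A" "finite B" "\<And>x y. x \<in> A \<Longrightarrow> y \<in> B \<Longrightarrow> 0 \<le> f x y" "x \<in> A" "y \<in> B"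
  shows "f x y \<le> (\<Sum>x\<in>A. \<Sum>y\<in>B. f x y)"
proof -
  have "f x y \<le> (\<Sum>y\<in>B. f x y)" using assms by (intro member_le_sum[where f = "f x"]) auto
  also have "\<dots> \<le> (\<Sum>x\<in>A. \<Sum>y\<in>B. f x y)"
    using assms by (intro member_le_sum[where f = "\<lambda>x. \<Sum>y\<in>B. f x y"] sum_nonneg) auto
  finally show ?thesis .
qed

lemma cmod_sum_mult_square_le:
  fixes f g :: "'i \<Rightarrow> complex"
  shows "(cmod (\<Sum>i\<in>A. f i * g i))\<^sup>2 \<le> (\<Sum>i\<in>A. (cmod (f i))\<^sup>2) * (\<Sum>i\<in>A. (cmod (g i))\<^sup>2)"
proof -
  have "cmod (\<Sum>i\<in>A. f i * g i) \<le> (\<Sum>i\<in>A. cmod (f i) * cmod (g i))"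
    using norm_sum[of "\<lambda>i. f i * g i" A] by (simp add: norm_mult)
  then have "(cmod (\<Sum>i\<in>A. f i * g i))\<^sup>2 \<le> (\<Sum>i\<in>A. cmod (f i) * cmod (g i))\<^sup>2"
    by (simp add: power_mono)
  also have "\<dots> \<le> (\<Sum>i\<in>A. (cmod (f i))\<^sup>2) * (\<Sum>i\<in>A. (cmod (g i))\<^sup>2)"
    by (rule Cauchy_Schwarz_ineq_sum)
  finally show ?thesis .
qed

section \<open>Orthonormal sets in complex coordinate space\<close>

definition cinner :: "complex^'n \<Rightarrow> complex^'n \<Rightarrow> complex" where
  "cinner u v = (\<Sum>i\<in>UNIV. cnj (u$i) * v$i)"

lemma cinner_sum_right: "cinner u (\<Sum>x\<in>A. f x) = (\<Sum>x\<in>A. cinner u (f x))"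
  by (simp add: cinner_def sum_distrib_left sum.swap[of _ A])

lemma cinner_sum_left: "cinner (\<Sum>x\<in>A. f x) v = (\<Sum>x\<in>A. cinner (f x) v)"
  by (simp add: cinner_def sum_distrib_right sum.swap[of _ A] cnj_sum)

lemma cinner_scale_right [simp]: "cinner u (c *s v) = c * cinner u v"
  by (simp add: cinner_def sum_distrib_left mult_ac)

lemma cinner_scale_left [simp]: "cinner (c *s u) v = cnj c * cinner u v"
  by (simp add: cinner_def sum_distrib_left mult_ac)

lemma cinner_diff_right [simp]: "cinner u (v - w) = cinner u v - cinner u w"
  by (simp add: cinner_def algebra_simps sum_subtractf)

lemma cinner_diff_left [simp]: "cinner (v - w) u = cinner v u - cinner w u"
  by (simp add: cinner_def algebra_simps sum_subtractf)

lemma cinner_commute: "cinner v u = cnj (cinner u v)"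
  by (simp add: cinner_def cnj_sum mult.commute)

lemma cinner_self: "cinner v v = of_real (\<Sum>i\<in>UNIV. (cmod (v$i))\<^sup>2)"
  by (simp only: cinner_def cnj_self_mult of_real_sum)

lemma cinner_self_eq_0: "cinner v v = 0 \<longleftrightarrow> v = 0"
proof
  assume "cinner v v = 0"
  then have "(\<Sum>i\<in>UNIV. (cmod (v$i))\<^sup>2) = 0" by (simp only: cinner_self of_real_eq_0_iff)
  then show "v = 0"
    by (metis (mono_tags) finite sum_norm_square_eq_0D UNIV_I vec_eq_iff zero_index)
qed (simp add: cinner_def)

definition orthonormal :: "(complex^'n) set \<Rightarrow> bool" where
  "orthonormal U \<longleftrightarrow> (\<forall>u\<in>U. \<forall>v\<in>U. cinner u v = (if u = v then 1 else 0))"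

definition orth_proj :: "(complex^'n) set \<Rightarrow> complex^'n \<Rightarrow> complex^'n" where
  "orth_proj U v = (\<Sum>u\<in>U. cinner u v *s u)"

lemma cinner_orthonormal_sum:
  assumes "orthonormal U" "finite U" "u \<in> U"
  shows "cinner u (\<Sum>w\<in>U. c w *s w) = c u"
proof -
  have "cinner u (\<Sum>w\<in>U. c w *s w) = (\<Sum>w\<in>U. if w = u then c w else 0)"
    using assms(1,3) by (auto simp: cinner_sum_right orthonormal_def intro!: sum.cong)
  also have "\<dots> = c u" using assms(2,3) by simp
  finally show ?thesis .
qed

lemma cinner_orth_proj:
  "orthonormal U \<Longrightarrow> finite U \<Longrightarrow> u \<in> U \<Longrightarrow> cinner u (orth_proj U v) = cinner u v"
  unfolding orth_proj_def by (rule cinner_orthonormal_sum)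

lemma orthonormal_independent:
  assumes "orthonormal U"
  shows "vec.independent U"
  unfolding vec.dependent_explicit
proof clarify
  fix T c v assume T: "finite T" "T \<subseteq> U" "(\<Sum>v\<in>T. c v *s v) = 0" "v \<in> T" "c v \<noteq> 0"
  have "orthonormal T" using assms T(2) unfolding orthonormal_def by blast
  then have "cinner v (\<Sum>w\<in>T. c w *s w) = c v" using T by (intro cinner_orthonormal_sum)
  then show False using T by (simp add: cinner_def)
qed

lemma normalized_multiple_exists:
  assumes "w \<noteq> 0"
  shows "\<exists>c. cinner (c *s w) (c *s w) = 1 \<and> cinner (c *s w) w *s (c *s w) = w"
proof -
  define N where "N = (\<Sum>i\<in>UNIV. (cmod (w$i))\<^sup>2)"
  have ww: "cinner w w = of_real N" by (simp add: N_def cinner_self)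
  have "N \<noteq> 0" using assms ww cinner_self_eq_0[of w] by auto
  moreover have "N \<ge> 0" by (simp add: N_def sum_nonneg)
  ultimately have "N > 0" by simp
  define c where "c = complex_of_real (1 / sqrt N)"
  have "cnj c * c * cinner w w = of_real ((1 / sqrt N)\<^sup>2 * N)"
    by (simp only: c_def ww complex_cnj_complex_of_real of_real_mult power2_eq_square)
  also have "\<dots> = 1" using \<open>N > 0\<close> by (simp add: power_divide)
  finally have ccN: "cnj c * c * cinner w w = 1" .
  show ?thesis
  proof (intro exI[of _ c] conjI)
    show "cinner (c *s w) (c *s w) = 1"
      using ccN by (simp add: mult_ac)
    show "cinner (c *s w) w *s (c *s w) = w"
      using ccN by (simp add: vector_smult_assoc mult_ac)
  qed
qed

lemma orthonormal_extend:
  assumes on: "orthonormal U" and fin: "finite U"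
  obtains U' where "finite U'" "U' \<subseteq> vec.span (insert v U)" "orthonormal U'" "orth_proj U' v = v"
    "\<And>s. orth_proj U s = s \<Longrightarrow> orth_proj U' s = s"
proof -
  define w where "w = v - orth_proj U v"
  have w_orth: "cinner u w = 0" if "u \<in> U" for u
    using cinner_orth_proj[OF on fin that] by (simp add: w_def)
  have U_span: "U \<subseteq> vec.span (insert v U)" by (auto intro: vec.span_base)
  show ?thesis
  proof (cases "w = 0")
    case True
    then show ?thesis using that[of U] fin U_span on by (simp add: w_def)
  next
    case False
    then obtain c where "cinner (c *s w) (c *s w) = 1" "cinner (c *s w) w *s (c *s w) = w"
      using normalized_multiple_exists by blast
    moreover define e where "e = c *s w"
    ultimately have ee: "cinner e e = 1" and ew: "cinner e w *s e = w" by simp_all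
    have ue: "cinner u e = 0" "cinner e u = 0" if "u \<in> U" for u
      using w_orth[OF that] cinner_commute[of e u] by (simp_all add: e_def)
    have "e \<notin> U" using ee ue by force
    then have proj_insert: "orth_proj (insert e U) s = cinner e s *s e + orth_proj U s" for s
      using fin by (simp add: orth_proj_def)
    have "e \<in> vec.span (insert v U)"
      unfolding e_def w_def orth_proj_def
      by (intro vec.span_scale vec.span_diff vec.span_sum) (auto intro: vec.span_base)
    moreover have "orthonormal (insert e U)"
      using on ee ue unfolding orthonormal_def by auto
    moreover have "cinner e v = cinner e w"
      using ue by (simp add: w_def orth_proj_def cinner_sum_right)
    then have "orth_proj (insert e U) v = v" using ew by (simp add: proj_insert w_def)
    moreover have "orth_proj (insert e U) s = s" if "orth_proj U s = s" for s
    proof -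
      have "cinner e (orth_proj U s) = 0"
        using ue by (simp add: orth_proj_def cinner_sum_right)
      then show ?thesis using that by (simp add: proj_insert)
    qed
    ultimately show ?thesis using that[of "insert e U"] fin U_span by simp
  qed
qed

lemma orthonormal_basis_exists:
  fixes S :: "(complex^'n) set"
  assumes "finite S"
  shows "\<exists>U. finite U \<and> U \<subseteq> vec.span S \<and> orthonormal U \<and> (\<forall>s\<in>S. orth_proj U s = s)"
  using assms
proof (induction S rule: finite_induct)
  case empty
  show ?case by (intro exI[of _ "{}"]) (auto simp: orthonormal_def)
next
  case (insert v S)
  then obtain U where fin: "finite U" and sp: "U \<subseteq> vec.span S" and on: "orthonormal U"
    and fix_S: "\<forall>s\<in>S. orth_proj U s = s" by blast
  obtain U' where U': "finite U'" "U' \<subseteq> vec.span (insert v U)" "orthonormal U'" "orth_proj U' v = v"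
    and fix_U': "\<And>s. orth_proj U s = s \<Longrightarrow> orth_proj U' s = s"
    using orthonormal_extend[OF on fin] by blast
  have "insert v U \<subseteq> vec.span (insert v S)"
    using sp vec.span_mono[of S "insert v S"] by (auto intro: vec.span_base)
  then have "vec.span (insert v U) \<subseteq> vec.span (insert v S)"
    by (rule vec.span_minimal[OF _ vec.subspace_span])
  then show ?case using U' fix_U' fix_S by (intro exI[of _ U']) auto
qed

lemma orthonormal_projection_hs_norm:
  assumes "orthonormal U" "finite U"
  shows "(\<Sum>a\<in>UNIV. \<Sum>x\<in>UNIV. (cmod (\<Sum>u\<in>U. cnj (u$a) * u$x))\<^sup>2) = real (card U)"
proof -
  have "complex_of_real (\<Sum>a\<in>UNIV. \<Sum>x\<in>UNIV. (cmod (\<Sum>u\<in>U. cnj (u$a) * u$x))\<^sup>2)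
      = (\<Sum>a\<in>UNIV. \<Sum>x\<in>UNIV. cnj (\<Sum>u\<in>U. cnj (u$a) * u$x) * (\<Sum>u\<in>U. cnj (u$a) * u$x))"
    by (simp only: cnj_self_mult of_real_sum)
  also have "\<dots> = (\<Sum>u\<in>U. \<Sum>u'\<in>U. cinner u' u * cinner u u')"
    unfolding cinner_def
    by (simp add: cnj_sum sum_distrib_left sum_distrib_right, subst sum_swap_2_2, simp add: mult_ac)
  also have "\<dots> = (\<Sum>u\<in>U. \<Sum>u'\<in>U. if u' = u then 1 else 0)"
    using assms(1) by (intro sum.cong refl) (auto simp: orthonormal_def)
  also have "\<dots> = complex_of_real (real (card U))" using assms(2) by simp
  finally show ?thesis by (simp only: of_real_eq_iff)
qed

section \<open>The support projector of the reduced state\<close>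

lemma rho_A_quadratic_form:
  fixes \<psi> :: "'a::finite \<Rightarrow> 'b::finite \<Rightarrow> 'c::finite \<Rightarrow> complex"
  shows "(\<Sum>b\<in>UNIV. \<Sum>c\<in>UNIV. cnj (\<Sum>a\<in>UNIV. \<psi> a b c * d$a) * (\<Sum>a\<in>UNIV. \<psi> a b c * d$a))
    = (\<Sum>a\<in>UNIV. cnj (d$a) * cinner (row a (rho_A \<psi>)) d)"
proof -
  have row: "cinner (row a (rho_A \<psi>)) d
      = (\<Sum>a'\<in>UNIV. cnj (\<Sum>b\<in>UNIV. \<Sum>c\<in>UNIV. \<psi> a b c * cnj (\<psi> a' b c)) * d$a')" for a
    by (simp add: cinner_def row_def rho_A_def)
  show ?thesis
    unfolding row
    by (simp add: cnj_sum sum_distrib_left sum_distrib_right, subst sum_swap_2_2,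
        rule trans[OF sum.swap], simp add: mult_ac)
qed

lemma rho_A_kernel_annihilates:
  fixes \<psi> :: "'a::finite \<Rightarrow> 'b::finite \<Rightarrow> 'c::finite \<Rightarrow> complex"
  assumes "\<And>a. cinner (row a (rho_A \<psi>)) d = 0"
  shows "(\<Sum>a\<in>UNIV. \<psi> a b c * d$a) = 0"
proof -
  define Y where "Y b c = (\<Sum>a\<in>UNIV. \<psi> a b c * d$a)" for b c
  have "complex_of_real (\<Sum>b\<in>UNIV. \<Sum>c\<in>UNIV. (cmod (Y b c))\<^sup>2)
      = (\<Sum>b\<in>UNIV. \<Sum>c\<in>UNIV. cnj (Y b c) * Y b c)"
    by (simp only: cnj_self_mult of_real_sum)
  also have "\<dots> = 0"
    unfolding Y_def rho_A_quadratic_form by (simp add: assms)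
  finally have "(\<Sum>q\<in>UNIV. (cmod (case_prod Y q))\<^sup>2) = 0"
    by (simp only: sum_UNIV_prod prod.case of_real_eq_0_iff)
  then show ?thesis using sum_norm_square_eq_0D[of UNIV "case_prod Y" "(b, c)"] by (simp add: Y_def)
qed

lemma psi_fixed_by_projection_onto_rows:
  fixes \<psi> :: "'a::finite \<Rightarrow> 'b::finite \<Rightarrow> 'c::finite \<Rightarrow> complex"
  assumes on: "orthonormal U" and fin: "finite U"
    and rows: "\<And>a. orth_proj U (row a (rho_A \<psi>)) = row a (rho_A \<psi>)"
  shows "\<psi> a b c = (\<Sum>x\<in>UNIV. (\<Sum>u\<in>U. cnj (u$a) * u$x) * \<psi> x b c)"
proof -
  txt \<open>The residual d of the slice m is orthogonal to the rows of rho_A, so it annihilates \<psi>;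
    hence d is orthogonal to m, and thus to itself.\<close>
  define m :: "complex^'a" where "m = (\<chi> a. cnj (\<psi> a b c))"
  define d where "d = m - orth_proj U m"
  have du: "cinner u d = 0" if "u \<in> U" for u
    using cinner_orth_proj[OF on fin that] by (simp add: d_def)
  have "cinner (row a (rho_A \<psi>)) d = 0" for a
    using du by (subst rows[symmetric]) (simp add: orth_proj_def cinner_sum_left)
  then have "(\<Sum>a\<in>UNIV. \<psi> a b c * d$a) = 0" by (rule rho_A_kernel_annihilates)
  then have md: "cinner m d = 0" by (simp add: cinner_def m_def)
  have "cinner (orth_proj U m) d = 0"
    using du by (simp add: orth_proj_def cinner_sum_left)
  then have "cinner (m - orth_proj U m) d = 0" using md by simp
  then have "cinner d d = 0" by (simp only: d_def[symmetric])
  then have "d = 0" by (simp only: cinner_self_eq_0)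
  then have "m = orth_proj U m" by (simp add: d_def)
  then have "m$a = orth_proj U m $ a" by (rule arg_cong)
  then have "cnj (\<psi> a b c) = (\<Sum>u\<in>U. cinner u m * u$a)"
    by (simp add: m_def orth_proj_def)
  then have "\<psi> a b c = (\<Sum>u\<in>U. cnj (cinner u m) * cnj (u$a))"
    by (metis (no_types, lifting) cnj_sum complex_cnj_cnj complex_cnj_mult sum.cong)
  also have "\<dots> = (\<Sum>x\<in>UNIV. (\<Sum>u\<in>U. cnj (u$a) * u$x) * \<psi> x b c)"
    by (simp add: cinner_def m_def cnj_sum sum_distrib_right sum_distrib_left sum.swap[of _ U] mult_ac)
  finally show ?thesis .
qed

text \<open>The witness is the orthogonal projector onto the row space of rho_A.\<close>

lemma support_projector_exists:
  fixes \<psi> :: "'a::finite \<Rightarrow> 'b::finite \<Rightarrow> 'c::finite \<Rightarrow> complex"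
  obtains P :: "'a \<Rightarrow> 'a \<Rightarrow> complex"
  where "\<And>a b c. \<psi> a b c = (\<Sum>x\<in>UNIV. P a x * \<psi> x b c)"
    and "(\<Sum>a\<in>UNIV. \<Sum>x\<in>UNIV. (cmod (P a x))\<^sup>2) \<le> real (rank (rho_A \<psi>))"
proof -
  have rows: "rows (rho_A \<psi>) = range (\<lambda>a. row a (rho_A \<psi>))" by (auto simp: rows_def)
  obtain U where fin: "finite U" and sp: "U \<subseteq> vec.span (rows (rho_A \<psi>))" and on: "orthonormal U"
    and fix_rows: "\<forall>s\<in>rows (rho_A \<psi>). orth_proj U s = s"
    using orthonormal_basis_exists[of "rows (rho_A \<psi>)"] unfolding rows by auto
  have "card U \<le> vec.dim (vec.span (rows (rho_A \<psi>)))"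
    by (rule vec.independent_card_le_dim[OF sp orthonormal_independent[OF on]])
  then have "card U \<le> rank (rho_A \<psi>)" by (simp add: row_rank_def_gen)
  moreover have "orth_proj U (row a (rho_A \<psi>)) = row a (rho_A \<psi>)" for a
    using fix_rows unfolding rows by auto
  ultimately show ?thesis
  proof (intro that[of "\<lambda>a x. \<Sum>u\<in>U. cnj (u$a) * u$x"])
    show "\<psi> a b c = (\<Sum>x\<in>UNIV. (\<Sum>u\<in>U. cnj (u$a) * u$x) * \<psi> x b c)"
      if "\<And>a. orth_proj U (row a (rho_A \<psi>)) = row a (rho_A \<psi>)" for a b c
      by (rule psi_fixed_by_projection_onto_rows[OF on fin that])
  qed (simp_all add: orthonormal_projection_hs_norm[OF on fin])
qed

section \<open>Contracting the B and C legs\<close>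

lemma prod_lessThan_4: "(\<Prod>k<4. f k) = f 0 * f 1 * f (2::nat) * (f 3 :: 'a::comm_monoid_mult)"
  by (simp add: numeral_eq_Suc lessThan_Suc mult_ac)

definition bc_contraction_term ::
    "('a \<Rightarrow> 'b \<Rightarrow> 'c \<Rightarrow> complex) \<Rightarrow> 'a \<Rightarrow> 'a \<Rightarrow> 'a \<Rightarrow> 'a \<Rightarrow> 'b \<Rightarrow> 'b \<Rightarrow> 'c \<Rightarrow> 'c \<Rightarrow> complex" where
  "bc_contraction_term \<psi> a0 a1 a2 a3 b b' c c' =
     \<psi> a0 b c * cnj (\<psi> a2 b' c) * \<psi> a1 b' c' * cnj (\<psi> a3 b c')"

definition bc_contraction ::
    "('a \<Rightarrow> 'b::finite \<Rightarrow> 'c::finite \<Rightarrow> complex) \<Rightarrow> 'a \<Rightarrow> 'a \<Rightarrow> 'a \<Rightarrow> 'a \<Rightarrow> complex" where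
  "bc_contraction \<psi> a0 a1 a2 a3 =
     (\<Sum>b\<in>UNIV. \<Sum>b'\<in>UNIV. \<Sum>c\<in>UNIV. \<Sum>c'\<in>UNIV. bc_contraction_term \<psi> a0 a1 a2 a3 b b' c c')"

type_synonym ('a, 'b, 'c) labels = "'a \<times> 'a \<times> 'a \<times> 'a \<times> 'b \<times> 'b \<times> 'c \<times> 'c \<times> 'b \<times> 'b \<times> 'c \<times> 'c"

text \<open>The twelve labels of four copies are placed so that the summand of Z_ABC factors as
  bc_contraction_term at (b, b', c, c') times the conjugate of bc_contraction_term at (B, B', C, C').\<close>

definition config_of_labels :: "('a, 'b, 'c) labels \<Rightarrow> nat \<Rightarrow> 'a \<times> 'b \<times> 'c" where
  "config_of_labels t k = (let (a0,a1,a2,a3,b,b',c,c',B,B',C,C') = t in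
     (if k = 0 then (a0,B,C) else if k = 1 then (a1,B',C') else if k = 2 then (a2,b',c)
          else if k = 3 then (a3,b,c') else undefined))"

definition labels_of_config :: "(nat \<Rightarrow> 'a \<times> 'b \<times> 'c) \<Rightarrow> ('a, 'b, 'c) labels" where
  "labels_of_config y = (fst (y 0), fst (y 1), fst (y 2), fst (y 3), fst (snd (y 3)), fst (snd (y 2)),
     snd (snd (y 2)), snd (snd (y 3)), fst (snd (y 0)), fst (snd (y 1)), snd (snd (y 0)), snd (snd (y 1)))"

lemma sum_configs_4_reindex:
  "(\<Sum>y\<in>configs 4. g y) = (\<Sum>t\<in>(UNIV :: ('a::finite, 'b::finite, 'c::finite) labels set).
     g (config_of_labels t))"
proof -
  have inverse: "config_of_labels (labels_of_config y) = y"
    if y: "y \<in> configs 4" for y :: "nat \<Rightarrow> 'a \<times> 'b \<times> 'c"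
  proof
    fix k
    show "config_of_labels (labels_of_config y) k = y k"
    proof (cases "k < 4")
      case True
      then have "k = 0 \<or> k = 1 \<or> k = 2 \<or> k = 3" by auto
      then show ?thesis by (auto simp: config_of_labels_def labels_of_config_def Let_def)
    next
      case False
      then have "y k = undefined" using y by (auto simp: configs_def PiE_def extensional_def)
      then show ?thesis using False by (auto simp: config_of_labels_def labels_of_config_def Let_def)
    qed
  qed
  show ?thesis
  proof (rule sum.reindex_bij_witness[of _ config_of_labels labels_of_config])
    fix t :: "('a, 'b, 'c) labels"
    show "labels_of_config (config_of_labels t) = t"
      by (simp add: config_of_labels_def labels_of_config_def Let_def split: prod.splits)
    show "config_of_labels t \<in> configs 4"
      by (auto simp: config_of_labels_def configs_def PiE_def extensional_def Let_def split: prod.splits)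
  qed (auto simp: inverse)
qed

lemma pi_values: "pi1 0 = 1" "pi1 1 = 0" "pi1 2 = 3" "pi1 3 = 2"
  "pi2 0 = 2" "pi2 1 = 3" "pi2 2 = 0" "pi2 3 = 1"
  "pi3 0 = 3" "pi3 1 = 2" "pi3 2 = 1" "pi3 3 = 0"
  by (simp_all add: pi1_def pi2_def pi3_def transpose_def)

lemma config_of_labels_values: "config_of_labels (a0,a1,a2,a3,b,b',c,c',B,B',C,C') 0 = (a0,B,C)"
  "config_of_labels (a0,a1,a2,a3,b,b',c,c',B,B',C,C') 1 = (a1,B',C')"
  "config_of_labels (a0,a1,a2,a3,b,b',c,c',B,B',C,C') 2 = (a2,b',c)"
  "config_of_labels (a0,a1,a2,a3,b,b',c,c',B,B',C,C') 3 = (a3,b,c')"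
  by (simp_all add: config_of_labels_def)

lemma Z_summand_config_of_labels:
  fixes \<psi> :: "'a::finite \<Rightarrow> 'b::finite \<Rightarrow> 'c::finite \<Rightarrow> complex"
  shows "cnj (tensor_pow \<psi> 4 (config_of_labels (a0,a1,a2,a3,b,b',c,c',B,B',C,C')))
      * perm_op pi1 pi2 pi3 (tensor_pow \<psi> 4) (config_of_labels (a0,a1,a2,a3,b,b',c,c',B,B',C,C'))
    = bc_contraction_term \<psi> a0 a1 a2 a3 b b' c c' * cnj (bc_contraction_term \<psi> a0 a1 a2 a3 B B' C C')"
  unfolding tensor_pow_def perm_op_def prod_lessThan_4
  unfolding pi_values config_of_labels_values fst_conv snd_conv bc_contraction_term_def
  by (simp add: mult_ac)

lemma bc_contraction_mult_cnj:
  "bc_contraction \<psi> a0 a1 a2 a3 * cnj (bc_contraction \<psi> a0 a1 a2 a3)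
   = (\<Sum>b\<in>UNIV. \<Sum>b'\<in>UNIV. \<Sum>c\<in>UNIV. \<Sum>c'\<in>UNIV. \<Sum>B\<in>UNIV. \<Sum>B'\<in>UNIV. \<Sum>C\<in>UNIV. \<Sum>C'\<in>UNIV.
       bc_contraction_term \<psi> a0 a1 a2 a3 b b' c c' * cnj (bc_contraction_term \<psi> a0 a1 a2 a3 B B' C C'))"
  unfolding bc_contraction_def cnj_sum by (simp only: sum_distrib_right, simp only: sum_distrib_left)

lemma Z_ABC_eq_sum_norm_square:
  fixes \<psi> :: "'a::finite \<Rightarrow> 'b::finite \<Rightarrow> 'c::finite \<Rightarrow> complex"
  shows "Z_ABC \<psi> = complex_of_real
    (\<Sum>a0\<in>UNIV. \<Sum>a1\<in>UNIV. \<Sum>a2\<in>UNIV. \<Sum>a3\<in>UNIV. (cmod (bc_contraction \<psi> a0 a1 a2 a3))\<^sup>2)"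
proof -
  have "Z_ABC \<psi> = (\<Sum>a0\<in>UNIV. \<Sum>a1\<in>UNIV. \<Sum>a2\<in>UNIV. \<Sum>a3\<in>UNIV.
      bc_contraction \<psi> a0 a1 a2 a3 * cnj (bc_contraction \<psi> a0 a1 a2 a3))"
    unfolding Z_ABC_def bc_contraction_mult_cnj
    by (subst sum_configs_4_reindex) (simp only: sum_UNIV_prod Z_summand_config_of_labels)
  then show ?thesis by (simp only: cnj_mult_self of_real_sum)
qed

lemma bc_contraction_term_project:
  fixes \<psi> :: "'a::finite \<Rightarrow> 'b::finite \<Rightarrow> 'c::finite \<Rightarrow> complex"
  assumes fixed: "\<And>a b c. \<psi> a b c = (\<Sum>x\<in>UNIV. P a x * \<psi> x b c)"
  shows "bc_contraction_term \<psi> a0 a1 a2 a3 b b' c c'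
    = (\<Sum>x\<in>UNIV. \<Sum>x'\<in>UNIV. P a0 x * P a1 x' * bc_contraction_term \<psi> x x' a2 a3 b b' c c')"
proof -
  define K where "K = cnj (\<psi> a2 b' c) * cnj (\<psi> a3 b c')"
  have pp: "\<psi> a0 b c * \<psi> a1 b' c' = (\<Sum>x\<in>UNIV. \<Sum>x'\<in>UNIV. (P a0 x * \<psi> x b c) * (P a1 x' * \<psi> x' b' c'))"
    by (subst fixed[of a0], subst fixed[of a1], rule sum_product)
  have "bc_contraction_term \<psi> a0 a1 a2 a3 b b' c c' = (\<psi> a0 b c * \<psi> a1 b' c') * K"
    by (simp add: bc_contraction_term_def K_def mult_ac)
  also have "\<dots> = (\<Sum>x\<in>UNIV. \<Sum>x'\<in>UNIV. (P a0 x * \<psi> x b c) * (P a1 x' * \<psi> x' b' c')) * K"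
    by (simp only: pp)
  also have "\<dots> = (\<Sum>x\<in>UNIV. \<Sum>x'\<in>UNIV. (P a0 x * \<psi> x b c) * (P a1 x' * \<psi> x' b' c') * K)"
    by (simp only: sum_distrib_right)
  also have "\<dots> = (\<Sum>x\<in>UNIV. \<Sum>x'\<in>UNIV. P a0 x * P a1 x' * bc_contraction_term \<psi> x x' a2 a3 b b' c c')"
    by (simp add: bc_contraction_term_def K_def mult_ac)
  finally show ?thesis .
qed

lemma bc_contraction_project:
  fixes \<psi> :: "'a::finite \<Rightarrow> 'b::finite \<Rightarrow> 'c::finite \<Rightarrow> complex"
  assumes fixed: "\<And>a b c. \<psi> a b c = (\<Sum>x\<in>UNIV. P a x * \<psi> x b c)"
  shows "bc_contraction \<psi> a0 a1 a2 a3
    = (\<Sum>x\<in>UNIV. \<Sum>x'\<in>UNIV. P a0 x * P a1 x' * bc_contraction \<psi> x x' a2 a3)"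
proof -
  have "bc_contraction \<psi> a0 a1 a2 a3 = (\<Sum>b\<in>UNIV. \<Sum>b'\<in>UNIV. \<Sum>c\<in>UNIV. \<Sum>c'\<in>UNIV. \<Sum>x\<in>UNIV. \<Sum>x'\<in>UNIV.
      P a0 x * P a1 x' * bc_contraction_term \<psi> x x' a2 a3 b b' c c')"
    unfolding bc_contraction_def by (intro sum.cong refl) (rule bc_contraction_term_project[OF fixed])
  also have "\<dots> = (\<Sum>x\<in>UNIV. \<Sum>x'\<in>UNIV. \<Sum>b\<in>UNIV. \<Sum>b'\<in>UNIV. \<Sum>c\<in>UNIV. \<Sum>c'\<in>UNIV.
      P a0 x * P a1 x' * bc_contraction_term \<psi> x x' a2 a3 b b' c c')"
    by (rule sum_swap_4_2)
  also have "\<dots> = (\<Sum>x\<in>UNIV. \<Sum>x'\<in>UNIV. P a0 x * P a1 x' * bc_contraction \<psi> x x' a2 a3)"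
    unfolding bc_contraction_def by (simp only: sum_distrib_left)
  finally show ?thesis .
qed

lemma trace_rho_B_square_eq:
  fixes \<psi> :: "'a::finite \<Rightarrow> 'b::finite \<Rightarrow> 'c::finite \<Rightarrow> complex"
  shows "trace (rho_B \<psi> ** rho_B \<psi>) = (\<Sum>a\<in>UNIV. \<Sum>a'\<in>UNIV. bc_contraction \<psi> a a' a a')"
proof -
  have "trace (rho_B \<psi> ** rho_B \<psi>) = (\<Sum>b\<in>UNIV. \<Sum>b'\<in>UNIV.
      (\<Sum>a\<in>UNIV. \<Sum>c\<in>UNIV. \<psi> a b c * cnj (\<psi> a b' c)) *
      (\<Sum>a'\<in>UNIV. \<Sum>c'\<in>UNIV. \<psi> a' b' c' * cnj (\<psi> a' b c')))"
    by (simp add: trace_def matrix_matrix_mult_def rho_B_def)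
  also have "\<dots> = (\<Sum>b\<in>UNIV. \<Sum>b'\<in>UNIV. \<Sum>a\<in>UNIV. \<Sum>a'\<in>UNIV. \<Sum>c\<in>UNIV. \<Sum>c'\<in>UNIV.
      (\<psi> a b c * cnj (\<psi> a b' c)) * (\<psi> a' b' c' * cnj (\<psi> a' b c')))"
    by (simp only: sum_product)
  also have "\<dots> = (\<Sum>a\<in>UNIV. \<Sum>a'\<in>UNIV. \<Sum>b\<in>UNIV. \<Sum>b'\<in>UNIV. \<Sum>c\<in>UNIV. \<Sum>c'\<in>UNIV.
      (\<psi> a b c * cnj (\<psi> a b' c)) * (\<psi> a' b' c' * cnj (\<psi> a' b c')))"
    by (rule sum_swap_2_2)
  also have "\<dots> = (\<Sum>a\<in>UNIV. \<Sum>a'\<in>UNIV. bc_contraction \<psi> a a' a a')"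
    by (simp add: bc_contraction_def bc_contraction_term_def mult_ac)
  finally show ?thesis .
qed

lemma trace_square_hermitian:
  fixes A :: "complex^'n^'n"
  assumes hermitian: "\<And>i j. A$j$i = cnj (A$i$j)"
  shows "trace (A ** A) = complex_of_real (\<Sum>i\<in>UNIV. \<Sum>j\<in>UNIV. (cmod (A$i$j))\<^sup>2)"
proof -
  have "trace (A ** A) = (\<Sum>i\<in>UNIV. \<Sum>j\<in>UNIV. A$i$j * A$j$i)"
    by (simp add: trace_def matrix_matrix_mult_def)
  also have "\<dots> = (\<Sum>i\<in>UNIV. \<Sum>j\<in>UNIV. A$i$j * cnj (A$i$j))"
    by (intro sum.cong refl) (metis hermitian)
  finally show ?thesis by (simp only: cnj_mult_self of_real_sum)
qed

lemma trace_rho_B_square_bound: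
  fixes \<psi> :: "'a::finite \<Rightarrow> 'b::finite \<Rightarrow> 'c::finite \<Rightarrow> complex"
  shows "(Re (trace (rho_B \<psi> ** rho_B \<psi>)))\<^sup>2 \<le> (real (rank (rho_A \<psi>)))\<^sup>2 * Re (Z_ABC \<psi>)"
proof -
  obtain P where fixed: "\<And>a b c. \<psi> a b c = (\<Sum>x\<in>UNIV. P a x * \<psi> x b c)"
    and P_norm: "(\<Sum>a\<in>UNIV. \<Sum>x\<in>UNIV. (cmod (P a x))\<^sup>2) \<le> real (rank (rho_A \<psi>))"
    using support_projector_exists[of \<psi>] by blast
  define F where "F = (\<Sum>a\<in>UNIV. \<Sum>x\<in>UNIV. (cmod (P a x))\<^sup>2)"
  define f where "f = (\<lambda>(a::'a, a'::'a, x::'a, x'::'a). P a x * P a' x')"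
  define g where "g = (\<lambda>(a::'a, a'::'a, x::'a, x'::'a). bc_contraction \<psi> x x' a a')"
  have "trace (rho_B \<psi> ** rho_B \<psi>)
      = (\<Sum>a\<in>UNIV. \<Sum>a'\<in>UNIV. \<Sum>x\<in>UNIV. \<Sum>x'\<in>UNIV. P a x * P a' x' * bc_contraction \<psi> x x' a a')"
    unfolding trace_rho_B_square_eq by (intro sum.cong refl) (rule bc_contraction_project[OF fixed])
  also have "\<dots> = (\<Sum>q\<in>UNIV. f q * g q)"
    by (simp only: sum_UNIV_prod f_def g_def prod.case)
  finally have trace: "trace (rho_B \<psi> ** rho_B \<psi>) = (\<Sum>q\<in>UNIV. f q * g q)" .
  have "(\<Sum>q\<in>UNIV. (cmod (f q))\<^sup>2)
      = (\<Sum>a\<in>UNIV. \<Sum>a'\<in>UNIV. \<Sum>x\<in>UNIV. \<Sum>x'\<in>UNIV. (cmod (P a x))\<^sup>2 * (cmod (P a' x'))\<^sup>2)"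
    by (simp only: sum_UNIV_prod f_def prod.case norm_mult power_mult_distrib)
  also have "\<dots> = F\<^sup>2"
    by (simp only: F_def power2_eq_square[of "sum _ _"] sum_product)
  finally have f_norm: "(\<Sum>q\<in>UNIV. (cmod (f q))\<^sup>2) = F\<^sup>2" .
  have "(\<Sum>q\<in>UNIV. (cmod (g q))\<^sup>2)
      = (\<Sum>a\<in>UNIV. \<Sum>a'\<in>UNIV. \<Sum>x\<in>UNIV. \<Sum>x'\<in>UNIV. (cmod (bc_contraction \<psi> x x' a a'))\<^sup>2)"
    by (simp only: sum_UNIV_prod g_def prod.case)
  also have "\<dots> = Re (Z_ABC \<psi>)"
    by (subst sum_swap_2_2) (simp only: Z_ABC_eq_sum_norm_square Re_complex_of_real)
  finally have g_norm: "(\<Sum>q\<in>UNIV. (cmod (g q))\<^sup>2) = Re (Z_ABC \<psi>)" .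
  have "0 \<le> F" "0 \<le> Re (Z_ABC \<psi>)"
    by (simp_all add: F_def Z_ABC_eq_sum_norm_square sum_nonneg)
  have "(Re (trace (rho_B \<psi> ** rho_B \<psi>)))\<^sup>2 \<le> (cmod (trace (rho_B \<psi> ** rho_B \<psi>)))\<^sup>2"
    by (metis abs_Re_le_cmod abs_ge_zero power2_abs power_mono)
  also have "\<dots> \<le> F\<^sup>2 * Re (Z_ABC \<psi>)"
    using cmod_sum_mult_square_le[of f g UNIV] by (simp only: trace f_norm g_norm)
  also have "\<dots> \<le> (real (rank (rho_A \<psi>)))\<^sup>2 * Re (Z_ABC \<psi>)"
    using \<open>0 \<le> F\<close> \<open>0 \<le> Re (Z_ABC \<psi>)\<close> P_norm
    by (intro mult_right_mono power_mono) (simp_all add: F_def)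
  finally show ?thesis .
qed

lemma rho_B_hermitian: "rho_B \<psi> $ b' $ b = cnj (rho_B \<psi> $ b $ b')"
  by (simp add: rho_B_def cnj_sum mult.commute)

lemma rho_B_diagonal: "rho_B \<psi> $ b $ b = complex_of_real (\<Sum>a\<in>UNIV. \<Sum>c\<in>UNIV. (cmod (\<psi> a b c))\<^sup>2)"
  by (simp only: rho_B_def vec_lambda_beta cnj_mult_self of_real_sum)

lemma trace_rho_B_square_pos:
  fixes \<psi> :: "'a::finite \<Rightarrow> 'b::finite \<Rightarrow> 'c::finite \<Rightarrow> complex"
  assumes "\<psi> a b c \<noteq> 0"
  shows "0 < Re (trace (rho_B \<psi> ** rho_B \<psi>))"
proof -
  have "0 < (cmod (\<psi> a b c))\<^sup>2" using assms by simp
  also have "\<dots> \<le> (\<Sum>a'\<in>UNIV. \<Sum>c'\<in>UNIV. (cmod (\<psi> a' b c'))\<^sup>2)"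
    by (rule member_le_sum_sum) auto
  also have "\<dots> = cmod (rho_B \<psi> $ b $ b)"
    unfolding rho_B_diagonal norm_of_real by (simp add: sum_nonneg)
  finally have "0 < (cmod (rho_B \<psi> $ b $ b))\<^sup>2" by simp
  also have "\<dots> \<le> (\<Sum>i\<in>UNIV. \<Sum>j\<in>UNIV. (cmod (rho_B \<psi> $ i $ j))\<^sup>2)"
    by (rule member_le_sum_sum) auto
  also have "\<dots> = Re (trace (rho_B \<psi> ** rho_B \<psi>))"
    by (simp add: trace_square_hermitian[OF rho_B_hermitian])
  finally show ?thesis .
qed

lemma rank_rho_A_pos:
  fixes \<psi> :: "'a::finite \<Rightarrow> 'b::finite \<Rightarrow> 'c::finite \<Rightarrow> complex"
  assumes "\<psi> a b c \<noteq> 0"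
  shows "0 < rank (rho_A \<psi>)"
proof (rule ccontr)
  assume "\<not> 0 < rank (rho_A \<psi>)"
  then have rank: "real (rank (rho_A \<psi>)) = 0" by simp
  obtain P where fixed: "\<And>a b c. \<psi> a b c = (\<Sum>x\<in>UNIV. P a x * \<psi> x b c)"
    and P_norm: "(\<Sum>a\<in>UNIV. \<Sum>x\<in>UNIV. (cmod (P a x))\<^sup>2) \<le> real (rank (rho_A \<psi>))"
    using support_projector_exists[of \<psi>] by blast
  have entry_le: "(cmod (P a x))\<^sup>2 \<le> (\<Sum>a\<in>UNIV. \<Sum>x\<in>UNIV. (cmod (P a x))\<^sup>2)" for x
    by (rule member_le_sum_sum) auto
  have "(cmod (P a x))\<^sup>2 \<le> 0" for x using entry_le[of x] P_norm rank by linarith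
  then have "P a x = 0" for x by simp
  then have "\<psi> a b c = 0" by (subst fixed) simp
  with assms show False ..
qed

theorem mainTheorem4:
  fixes \<psi> :: "'a::finite \<Rightarrow> 'b::finite \<Rightarrow> 'c::finite \<Rightarrow> complex"
  assumes "is_pure_state \<psi>"
  shows "G_ABC \<psi> \<le> S0_A \<psi> + S2_B \<psi>"
proof -
  txt \<open>Normalisation is only needed to rule out \<psi> = 0.\<close>
  obtain a b c where "\<psi> a b c \<noteq> 0"
    using assms by (force simp: is_pure_state_def)
  define t where "t = Re (trace (rho_B \<psi> ** rho_B \<psi>))"
  define r where "r = real (rank (rho_A \<psi>))"
  define Z where "Z = Re (Z_ABC \<psi>)"
  have "0 < t" unfolding t_def by (rule trace_rho_B_square_pos) fact
  have "0 < r" unfolding r_def using rank_rho_A_pos[of \<psi> a b c] \<open>\<psi> a b c \<noteq> 0\<close> by simp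
  have "t\<^sup>2 \<le> r\<^sup>2 * Z" unfolding t_def r_def Z_def by (rule trace_rho_B_square_bound)
  moreover have "0 < t\<^sup>2" using \<open>0 < t\<close> by simp
  ultimately have "0 < r\<^sup>2 * Z" by linarith
  then have "0 < Z" using \<open>0 < r\<close> by (simp add: zero_less_mult_iff)
  have "2 * log 2 t = log 2 (t\<^sup>2)" using \<open>0 < t\<close> by (simp add: log_nat_power)
  also have "\<dots> \<le> log 2 (r\<^sup>2 * Z)" using \<open>0 < t\<close> \<open>0 < r\<close> \<open>0 < Z\<close> \<open>t\<^sup>2 \<le> r\<^sup>2 * Z\<close> by simp
  also have "\<dots> = 2 * log 2 r + log 2 Z" using \<open>0 < r\<close> \<open>0 < Z\<close> by (simp add: log_mult log_nat_power)
  finally show ?thesis by (simp add: G_ABC_def S0_A_def S2_B_def t_def r_def Z_def)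
qed

end
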